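(* Let $A_1,A_2,A_3$ be finite subsets of $\mathbb{R}$ with $|A_1|\le|A_2|\le|A_3|$. Let $\mathcal{L}$ be the set of lines $l$ in $\mathbb{R}^2$ that contain three distinct points $u_1,u_2,u_3$ with $u_i\in A_i\times A_i$ ($i=1,2,3$). For $l\in\mathcal{L}$ put $\alpha_{i,l}=|l\cap(A_i\times A_i)|$, and let $\mathcal{L}_{i,2}=\{l\in\mathcal{L}:\alpha_{i,l}\ge 2\}$. Then for every $i\in\{1,2,3\}$ and every real $1\le p\le 3$, \[ \sum_{l\in\mathcal{L}_{i,2}}\alpha_{i,l}^{\,p}\lesssim |A_1|^{3-p}|A_i|^{p+1}. \]
   Context: Notation: $X\lesssim Y$ means $X\le C\,Y(\log(2+N))^{c}$ for some absolute constants $C,c>0$, where $N$ is the largest cardinality of the finite sets in the statement. *)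

theory Defs
  imports Complex_Main
begin

definition is_line :: "(real \<times> real) set \<Rightarrow> bool" where
  "is_line l \<longleftrightarrow> (\<exists>a b c. (a, b) \<noteq> (0, 0) \<and> l = {(x, y). a * x + b * y = c})"

definition rich_lines :: "(nat \<Rightarrow> real set) \<Rightarrow> (real \<times> real) set set" where
  "rich_lines A = {l. is_line l \<and> (\<exists>u1 u2 u3. u1 \<in> l \<and> u2 \<in> l \<and> u3 \<in> l \<and>
      u1 \<in> A 1 \<times> A 1 \<and> u2 \<in> A 2 \<times> A 2 \<and> u3 \<in> A 3 \<times> A 3 \<and>
      u1 \<noteq> u2 \<and> u1 \<noteq> u3 \<and> u2 \<noteq> u3)}"

definition alpha :: "(nat \<Rightarrow> real set) \<Rightarrow> nat \<Rightarrow> (real \<times> real) set \<Rightarrow> nat" where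
  "alpha A i l = card (l \<inter> (A i \<times> A i))"

definition rich_lines2 :: "(nat \<Rightarrow> real set) \<Rightarrow> nat \<Rightarrow> (real \<times> real) set set" where
  "rich_lines2 A i = {l \<in> rich_lines A. alpha A i l \<ge> 2}"

end

theory Submission
  imports Defs "HOL-Analysis.Harmonic_Numbers"
begin

text \<open>
  Replace coordinates by their ranks in A_i, so that A_i \<times> A_i becomes the grid [n]^2. Along a
  line both rank coordinates move in the same (or in opposite) directions, so r_x \<plusminus> r_y labels
  the \<alpha> grid points of a line injectively by integers in an interval of length 3n, and label
  differences are l^1 rank distances. Cutting that interval into about \<alpha>/2 blocks produces \<alpha>/4
  pairs closer than the block length, whence \<alpha>^3 = O(n^2 \<Sum> 1/((u+1)(v+1))), summed over pairs of
  points of the line with rank distances u, v. Two points determine a line, so summing over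
  lines is bounded by the same sum over all pairs of grid points, which is n^2 (2 H_n)^2; thus
  \<Sum> \<alpha>^3 = O(n^4 log^2 n). Every line of the family also meets A_1 \<times> A_1, and pairing that point
  with the others gives \<Sum> \<alpha> \<le> 2 |A_1|^2 n^2. For 1 \<le> p \<le> 3 interpolate:
  \<alpha>^p \<le> T^(p-1) \<alpha> + T^(p-3) \<alpha>^3 with T = n / |A_1|.
\<close>

definition rank_in :: "'a::linorder set \<Rightarrow> 'a \<Rightarrow> nat" where
  "rank_in A x = card {y\<in>A. y < x}"

lemma rank_in_mono: "finite A \<Longrightarrow> x \<le> y \<Longrightarrow> rank_in A x \<le> rank_in A y"
  unfolding rank_in_def by (rule card_mono) auto

lemma rank_in_strict_mono: "finite A \<Longrightarrow> x \<in> A \<Longrightarrow> x < y \<Longrightarrow> rank_in A x < rank_in A y"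
  unfolding rank_in_def by (rule psubset_card_mono) auto

lemma rank_in_less_card: "finite A \<Longrightarrow> x \<in> A \<Longrightarrow> rank_in A x < card A"
  unfolding rank_in_def by (rule psubset_card_mono) auto

lemma inj_on_rank_in: "finite A \<Longrightarrow> inj_on (rank_in A) A"
  by (rule inj_onI) (metis linorder_neqE less_irrefl rank_in_strict_mono)

lemma sum_inverse_dist_le_harm:
  fixes i0 n :: nat
  assumes "i0 < n"
  shows "(\<Sum>i<n. 1 / (\<bar>real i - real i0\<bar> + 1)) \<le> 2 * harm n"
proof -
  let ?f = "\<lambda>i::nat. 1 / (\<bar>real i - real i0\<bar> + 1)"
  let ?g = "\<lambda>k::nat. 1 / (real k + 1)"
  have harm_eq: "harm n = (\<Sum>k<n. ?g k)"
    by (simp add: harm_altdef divide_inverse add.commute)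
  have split_set: "{..<n} = {i\<in>{..<n}. i \<le> i0} \<union> {i\<in>{..<n}. i0 < i}" by auto
  have split: "(\<Sum>i<n. ?f i) = (\<Sum>i\<in>{i\<in>{..<n}. i \<le> i0}. ?f i) + (\<Sum>i\<in>{i\<in>{..<n}. i0 < i}. ?f i)"
    by (subst split_set, rule sum.union_disjoint) auto
  have "(\<Sum>i\<in>{i\<in>{..<n}. i \<le> i0}. ?f i) = (\<Sum>i\<in>{i\<in>{..<n}. i \<le> i0}. ?g (i0 - i))"
    by (rule sum.cong) (auto simp: of_nat_diff)
  also have "\<dots> = (\<Sum>k\<in>(\<lambda>i. i0 - i) ` {i\<in>{..<n}. i \<le> i0}. ?g k)"
    by (rule sum.reindex[symmetric, unfolded comp_def]) (auto simp: inj_on_def)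
  also have "\<dots> \<le> (\<Sum>k<n. ?g k)"
    by (rule sum_mono2) (use assms in auto)
  finally have lower: "(\<Sum>i\<in>{i\<in>{..<n}. i \<le> i0}. ?f i) \<le> harm n" by (simp only: harm_eq)
  have "(\<Sum>i\<in>{i\<in>{..<n}. i0 < i}. ?f i) \<le> (\<Sum>i\<in>{i\<in>{..<n}. i0 < i}. ?g (i - i0 - 1))"
    by (rule sum_mono) (auto simp: of_nat_diff frac_le)
  also have "\<dots> = (\<Sum>k\<in>(\<lambda>i. i - i0 - 1) ` {i\<in>{..<n}. i0 < i}. ?g k)"
    by (rule sum.reindex[symmetric, unfolded comp_def]) (auto simp: inj_on_def)
  also have "\<dots> \<le> (\<Sum>k<n. ?g k)"
    by (rule sum_mono2) auto
  finally have upper: "(\<Sum>i\<in>{i\<in>{..<n}. i0 < i}. ?f i) \<le> harm n" by (simp only: harm_eq)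
  show ?thesis using split lower upper by linarith
qed

lemma harm_le_one_plus_ln:
  assumes "0 < n"
  shows "harm n \<le> 1 + ln (real n)"
proof -
  have "harm n - ln (real n) \<le> harm 1 - ln (real (1::nat))"
    using euler_mascheroni_sequence_decreasing[of 1 n] assms by simp
  moreover have "harm 1 = (1::real)" by (simp add: harm_def)
  ultimately show ?thesis by simp
qed

definition rank_closeness :: "'a::linorder set \<Rightarrow> 'a \<Rightarrow> 'a \<Rightarrow> real" where
  "rank_closeness A x y = 1 / (\<bar>real (rank_in A x) - real (rank_in A y)\<bar> + 1)"

definition grid_closeness :: "'a::linorder set \<Rightarrow> 'a \<times> 'a \<Rightarrow> 'a \<times> 'a \<Rightarrow> real" where
  "grid_closeness A p q = rank_closeness A (fst p) (fst q) * rank_closeness A (snd p) (snd q)"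

lemma rank_closeness_nonneg: "0 \<le> rank_closeness A x y"
  by (simp add: rank_closeness_def)

lemma grid_closeness_nonneg: "0 \<le> grid_closeness A p q"
  by (simp add: grid_closeness_def rank_closeness_nonneg)

lemma sum_rank_closeness_le:
  assumes "finite A" "x \<in> A"
  shows "(\<Sum>y\<in>A. rank_closeness A x y) \<le> 2 * harm (card A)"
proof -
  let ?f = "\<lambda>i::nat. 1 / (\<bar>real i - real (rank_in A x)\<bar> + 1)"
  have "(\<Sum>y\<in>A. rank_closeness A x y) = (\<Sum>y\<in>A. ?f (rank_in A y))"
    by (simp add: rank_closeness_def abs_minus_commute)
  also have "\<dots> = (\<Sum>i\<in>rank_in A ` A. ?f i)"
    by (rule sum.reindex[symmetric, unfolded comp_def]) (rule inj_on_rank_in[OF assms(1)])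
  also have "\<dots> \<le> (\<Sum>i<card A. ?f i)"
    by (rule sum_mono2) (use rank_in_less_card[OF assms(1)] in auto)
  also have "\<dots> \<le> 2 * harm (card A)"
    by (rule sum_inverse_dist_le_harm) (rule rank_in_less_card[OF assms])
  finally show ?thesis .
qed

lemma sum_grid_closeness_le:
  assumes "finite A"
  shows "(\<Sum>p\<in>A \<times> A. \<Sum>q\<in>A \<times> A. grid_closeness A p q) \<le> 4 * harm (card A) ^ 2 * real (card A) ^ 2"
proof -
  have row: "(\<Sum>q\<in>A \<times> A. grid_closeness A p q) \<le> (2 * harm (card A)) ^ 2" if "p \<in> A \<times> A" for p
  proof -
    have "(\<Sum>q\<in>A \<times> A. grid_closeness A p q)
        = (\<Sum>y\<in>A. rank_closeness A (fst p) y) * (\<Sum>y\<in>A. rank_closeness A (snd p) y)"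
      unfolding grid_closeness_def sum_product sum.cartesian_product by (simp add: case_prod_beta)
    also have "\<dots> \<le> (2 * harm (card A)) * (2 * harm (card A))"
      using that assms by (intro mult_mono sum_rank_closeness_le sum_nonneg rank_closeness_nonneg) (auto simp: harm_nonneg)
    finally show ?thesis by (simp add: power2_eq_square)
  qed
  have "(\<Sum>p\<in>A \<times> A. \<Sum>q\<in>A \<times> A. grid_closeness A p q) \<le> (\<Sum>p\<in>A \<times> A. (2 * harm (card A)) ^ 2)"
    by (rule sum_mono) (rule row)
  also have "\<dots> = 4 * harm (card A) ^ 2 * real (card A) ^ 2"
    by (simp add: card_cartesian_product power2_eq_square)
  finally show ?thesis .
qed

lemma card_le_card_fibre_pairs_add_card_image:
  assumes "finite S"
  shows "card S \<le> card {(x, y)\<in>S \<times> S. x \<noteq> y \<and> f x = f y} + card (f ` S)"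
  using assms
proof (induction S rule: finite_induct)
  case empty
  then show ?case by simp
next
  case (insert a F)
  let ?Q = "\<lambda>S. {(x, y)\<in>S \<times> S. x \<noteq> y \<and> f x = f y}"
  have fin: "finite (?Q (insert a F))"
    by (rule finite_subset[of _ "insert a F \<times> insert a F"]) (use insert.hyps(1) in auto)
  have sub: "?Q F \<subseteq> ?Q (insert a F)" by auto
  show ?case
  proof (cases "f a \<in> f ` F")
    case True
    then obtain b where b: "b \<in> F" "f b = f a" by auto
    then have new: "insert (a, b) (?Q F) \<subseteq> ?Q (insert a F)" "(a, b) \<notin> ?Q F"
      using sub insert.hyps(2) by auto
    have "Suc (card (?Q F)) = card (insert (a, b) (?Q F))"
      using finite_subset[OF sub fin] new(2) by simp
    also have "\<dots> \<le> card (?Q (insert a F))"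
      by (rule card_mono[OF fin new(1)])
    finally have "Suc (card (?Q F)) \<le> card (?Q (insert a F))" .
    moreover have "f ` insert a F = f ` F" using True by auto
    ultimately show ?thesis using insert by simp
  next
    case False
    then have "card (f ` insert a F) = Suc (card (f ` F))" using insert.hyps(1) by simp
    moreover have "card (?Q F) \<le> card (?Q (insert a F))" using fin sub by (rule card_mono)
    ultimately show ?thesis using insert by simp
  qed
qed

lemma card_le_card_close_pairs_add_blocks:
  fixes s :: "'a \<Rightarrow> int" and L M t :: int
  assumes "finite S" "s ` S \<subseteq> {L..<L + M}" "0 < M" "0 < t"
  shows "int (card S) \<le> int (card {(x, y)\<in>S \<times> S. x \<noteq> y \<and> \<bar>s x - s y\<bar> < t}) + (M - 1) div t + 1"
proof -
  define block where "block x = (s x - L) div t" for x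
  have "block ` S \<subseteq> {0..(M - 1) div t}"
  proof clarify
    fix x assume "x \<in> S"
    then have "0 \<le> s x - L" "s x - L \<le> M - 1" using assms(2) by auto
    then show "block x \<in> {0..(M - 1) div t}"
      using assms(4) by (simp add: block_def zdiv_mono1 pos_imp_zdiv_nonneg_iff)
  qed
  then have "card (block ` S) \<le> card {0..(M - 1) div t}"
    by (rule card_mono[OF finite_atLeastAtMost_int])
  moreover have "0 \<le> (M - 1) div t"
    using assms(3,4) by (simp add: pos_imp_zdiv_nonneg_iff)
  ultimately have blocks: "int (card (block ` S)) \<le> (M - 1) div t + 1" by simp
  have close: "\<bar>s x - s y\<bar> < t" if same: "block x = block y" for x y
  proof -
    have "s x - L = t * block x + (s x - L) mod t" "s y - L = t * block y + (s y - L) mod t"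
      by (simp_all add: block_def)
    then have "s x - L = t * block y + (s x - L) mod t" "s y - L = t * block y + (s y - L) mod t"
      unfolding same .
    moreover have "0 \<le> (s x - L) mod t" "(s x - L) mod t < t" "0 \<le> (s y - L) mod t" "(s y - L) mod t < t"
      using assms(4) by simp_all
    ultimately show ?thesis by linarith
  qed
  have "{(x, y)\<in>S \<times> S. x \<noteq> y \<and> block x = block y}
      \<subseteq> {(x, y)\<in>S \<times> S. x \<noteq> y \<and> \<bar>s x - s y\<bar> < t}"
    using close by auto
  then have "card {(x, y)\<in>S \<times> S. x \<noteq> y \<and> block x = block y}
      \<le> card {(x, y)\<in>S \<times> S. x \<noteq> y \<and> \<bar>s x - s y\<bar> < t}"
    using assms(1) by (intro card_mono) (auto intro: finite_subset[of _ "S \<times> S"])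
  then show ?thesis
    using blocks card_le_card_fibre_pairs_add_card_image[OF assms(1), of block] by linarith
qed

lemma card_close_pairs_ge:
  fixes s :: "'a \<Rightarrow> int" and L M t :: int
  assumes fin: "finite S" and range: "s ` S \<subseteq> {L..<L + M}" and two: "2 \<le> card S"
    and t_pos: "0 < t" and t_large: "2 * M \<le> t * int (card S)"
  shows "real (card S) \<le> 4 * real (card {(x, y)\<in>S \<times> S. x \<noteq> y \<and> \<bar>s x - s y\<bar> < t})"
proof -
  obtain x where "x \<in> S" using two by fastforce
  then have M_pos: "0 < M" using range by fastforce
  have "M - 1 = t * ((M - 1) div t) + (M - 1) mod t" by simp
  moreover have "0 \<le> (M - 1) mod t" using t_pos by simp
  ultimately have "t * (2 * ((M - 1) div t)) < t * int (card S)" using t_large by linarith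
  then have "2 * ((M - 1) div t) < int (card S)" using t_pos by (simp only: mult_less_cancel_left_pos)
  then show ?thesis
    using card_le_card_close_pairs_add_blocks[OF fin range M_pos t_pos] two by linarith
qed

lemma cube_card_le_sum_inverse_square_gaps:
  fixes s :: "'a \<Rightarrow> int" and L M :: int
  assumes fin: "finite S" and inj: "inj_on s S" and range: "s ` S \<subseteq> {L..<L + M}"
    and two: "2 \<le> card S"
  shows "real (card S) ^ 3
    \<le> 36 * real_of_int M ^ 2 * (\<Sum>(x, y)\<in>{(x, y)\<in>S \<times> S. x \<noteq> y}. 1 / (real_of_int \<bar>s x - s y\<bar> + 1) ^ 2)"
proof -
  define a where "a = card S"
  have "a = card (s ` S)" using card_image[OF inj] unfolding a_def by simp
  also have "\<dots> \<le> nat M" using card_mono[OF finite_atLeastLessThan_int range] by simp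
  finally have aM: "int a \<le> M" using two unfolding a_def by linarith
  have a_pos: "0 < real a" using two unfolding a_def by simp
  define t where "t = \<lceil>2 * real_of_int M / real a\<rceil>"
  have "2 * real_of_int M / real a \<le> real_of_int t" unfolding t_def by (rule le_of_int_ceiling)
  then have "real_of_int (2 * M) \<le> real_of_int (t * int a)" using a_pos by (simp add: field_simps)
  then have t_large: "2 * M \<le> t * int a" by (simp only: of_int_le_iff)
  then have "0 < t * int a" using aM two unfolding a_def by linarith
  then have t_pos: "0 < t" by (simp add: zero_less_mult_iff)
  have "real_of_int t < 2 * real_of_int M / real a + 1" unfolding t_def using ceiling_correct by linarith
  also have "\<dots> \<le> 3 * real_of_int M / real a" using aM a_pos by (simp add: field_simps)
  finally have t_small: "real_of_int t * real a \<le> 3 * real_of_int M" using a_pos by (simp add: field_simps)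
  define C where "C = {(x, y)\<in>S \<times> S. x \<noteq> y \<and> \<bar>s x - s y\<bar> < t}"
  have C_large: "real a \<le> 4 * real (card C)"
    unfolding a_def C_def using card_close_pairs_ge[OF fin range two t_pos] t_large a_def by blast
  have "real (card C) / real_of_int t ^ 2 = (\<Sum>(x, y)\<in>C. 1 / real_of_int t ^ 2)" by simp
  also have "\<dots> \<le> (\<Sum>(x, y)\<in>C. 1 / (real_of_int \<bar>s x - s y\<bar> + 1) ^ 2)"
  proof (rule sum_mono, clarify)
    fix x y assume "(x, y) \<in> C"
    then have "real_of_int (\<bar>s x - s y\<bar> + 1) \<le> real_of_int t" unfolding C_def by (simp only: of_int_le_iff) simp
    then show "1 / real_of_int t ^ 2 \<le> 1 / (real_of_int \<bar>s x - s y\<bar> + 1) ^ 2"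
      by (intro divide_left_mono power_mono) auto
  qed
  also have "\<dots> \<le> (\<Sum>(x, y)\<in>{(x, y)\<in>S \<times> S. x \<noteq> y}. 1 / (real_of_int \<bar>s x - s y\<bar> + 1) ^ 2)"
    using fin by (intro sum_mono2) (auto simp: C_def intro: finite_subset[of _ "S \<times> S"])
  finally have sum_ge: "real (card C) / real_of_int t ^ 2
    \<le> (\<Sum>(x, y)\<in>{(x, y)\<in>S \<times> S. x \<noteq> y}. 1 / (real_of_int \<bar>s x - s y\<bar> + 1) ^ 2)" .
  have "(real_of_int t * real a) ^ 2 \<le> (3 * real_of_int M) ^ 2"
    using t_small t_pos a_pos by (intro power_mono) auto
  then have "real a ^ 3 * real_of_int t ^ 2 \<le> real a * (9 * real_of_int M ^ 2)"
    using a_pos by (simp add: power2_eq_square power3_eq_cube algebra_simps)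
  also have "\<dots> \<le> 4 * real (card C) * (9 * real_of_int M ^ 2)"
    using C_large by (intro mult_right_mono) auto
  finally have "real a ^ 3 \<le> 36 * real_of_int M ^ 2 * (real (card C) / real_of_int t ^ 2)"
    using t_pos by (simp add: field_simps)
  also have "\<dots> \<le> 36 * real_of_int M ^ 2
      * (\<Sum>(x, y)\<in>{(x, y)\<in>S \<times> S. x \<noteq> y}. 1 / (real_of_int \<bar>s x - s y\<bar> + 1) ^ 2)"
    using sum_ge by (intro mult_left_mono) auto
  finally show ?thesis unfolding a_def .
qed

lemma is_lineE:
  assumes "is_line l"
  obtains a b c where "(a, b) \<noteq> (0, 0)" "\<And>x y. (x, y) \<in> l \<longleftrightarrow> a * x + b * y = c"
proof -
  from assms obtain a b c where "(a, b) \<noteq> (0, 0)" "l = {(x, y). a * x + b * y = c}"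
    unfolding is_line_def by blast
  then show thesis by (intro that[of a b c]) auto
qed

lemma mem_line_iff_collinear:
  assumes "is_line l" "p \<in> l" "q \<in> l" "p \<noteq> q"
  shows "z \<in> l \<longleftrightarrow> (fst z - fst p) * (snd q - snd p) = (snd z - snd p) * (fst q - fst p)"
proof -
  obtain a b c where ab: "(a, b) \<noteq> (0, 0)" and l: "\<And>x y. (x, y) \<in> l \<longleftrightarrow> a * x + b * y = c"
    using assms(1) by (rule is_lineE) blast
  define d1 d2 g1 g2 where "d1 = fst q - fst p" "d2 = snd q - snd p" "g1 = fst z - fst p" "g2 = snd z - snd p"
  have d: "a * d1 + b * d2 = 0"
    using l[of "fst p" "snd p"] l[of "fst q" "snd q"] assms(2,3) unfolding d1_d2_g1_g2_def
    by (simp add: algebra_simps)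
  have "(d1, d2) \<noteq> (0, 0)" using assms(4) unfolding d1_d2_g1_g2_def by (auto simp: prod_eq_iff)
  have "z \<in> l \<longleftrightarrow> a * g1 + b * g2 = 0"
    using l[of "fst p" "snd p"] l[of "fst z" "snd z"] assms(2) unfolding d1_d2_g1_g2_def
    by (simp add: algebra_simps)
  also have "\<dots> \<longleftrightarrow> g1 * d2 = g2 * d1"
  proof
    assume "a * g1 + b * g2 = 0"
    then have "a * (g1 * d2 - g2 * d1) = 0" "b * (g1 * d2 - g2 * d1) = 0"
      using d by algebra+
    then show "g1 * d2 = g2 * d1" using ab by auto
  next
    assume "g1 * d2 = g2 * d1"
    then have "d1 * (a * g1 + b * g2) = 0" "d2 * (a * g1 + b * g2) = 0"
      using d by algebra+
    then show "a * g1 + b * g2 = 0" using \<open>(d1, d2) \<noteq> (0, 0)\<close> by auto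
  qed
  finally show ?thesis unfolding d1_d2_g1_g2_def .
qed

lemma line_eq_if_two_common_points:
  assumes "is_line l" "is_line l'" "p \<noteq> q" "p \<in> l" "q \<in> l" "p \<in> l'" "q \<in> l'"
  shows "l = l'"
  using mem_line_iff_collinear[OF assms(1,4,5,3)] mem_line_iff_collinear[OF assms(2,6,7,3)] by blast

lemma line_slope_sign:
  assumes "is_line l"
  obtains \<sigma> :: real where "\<sigma> = 1 \<or> \<sigma> = -1"
    "\<And>p q. p \<in> l \<Longrightarrow> q \<in> l \<Longrightarrow> 0 \<le> \<sigma> * ((fst p - fst q) * (snd p - snd q))"
proof -
  obtain a b c where ab: "(a, b) \<noteq> (0, 0)" and l: "\<And>x y. (x, y) \<in> l \<longleftrightarrow> a * x + b * y = c"
    using assms by (rule is_lineE) blast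
  have key: "a * (fst p - fst q) = - (b * (snd p - snd q))" if "p \<in> l" "q \<in> l" for p q
    using l[of "fst p" "snd p"] l[of "fst q" "snd q"] that by (simp add: algebra_simps)
  have prod: "a * b * ((fst p - fst q) * (snd p - snd q)) \<le> 0" if "p \<in> l" "q \<in> l" for p q
  proof -
    have "a * b * ((fst p - fst q) * (snd p - snd q)) = (a * (fst p - fst q)) * (b * (snd p - snd q))"
      by (simp add: algebra_simps)
    also have "\<dots> = - (b * (snd p - snd q))\<^sup>2" unfolding key[OF that] by (simp add: power2_eq_square)
    finally show ?thesis by simp
  qed
  consider (zero) "a * b = 0" | (neg) "a * b < 0" | (pos) "0 < a * b" by linarith
  then show thesis
  proof cases
    case zero
    have "0 \<le> (fst p - fst q) * (snd p - snd q)" if "p \<in> l" "q \<in> l" for p q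
      using key[OF that] ab zero by auto
    then show thesis by (intro that[of 1]) simp_all
  next
    case neg
    then show thesis using prod mult_le_0_iff[of "a * b"] by (intro that[of 1]) auto
  next
    case pos
    then show thesis using prod mult_le_0_iff[of "a * b"] by (intro that[of "-1"]) auto
  qed
qed

lemma mono_diff_mult_nonneg:
  fixes f g :: "'a::linordered_idom \<Rightarrow> 'b::linordered_idom"
  assumes f: "mono f" and g: "mono g" and "0 \<le> (x1 - x2) * (y1 - y2)"
  shows "0 \<le> (f x1 - f x2) * (g y1 - g y2)"
proof -
  consider "x2 \<le> x1" "y2 \<le> y1" | "x1 \<le> x2" "y1 \<le> y2"
    using assms(3) by (auto simp: zero_le_mult_iff)
  then show ?thesis
  proof cases
    case 1
    then have "f x2 \<le> f x1" "g y2 \<le> g y1" using f g by (auto dest: monoD)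
    then show ?thesis by simp
  next
    case 2
    then have "f x1 \<le> f x2" "g y1 \<le> g y2" using f g by (auto dest: monoD)
    then show ?thesis by (simp add: mult_nonpos_nonpos)
  qed
qed

lemma abs_add_eq_if_mult_nonneg:
  fixes a b :: "'a::linordered_idom"
  shows "0 \<le> a * b \<Longrightarrow> \<bar>a + b\<bar> = \<bar>a\<bar> + \<bar>b\<bar>"
  by (auto simp: zero_le_mult_iff abs_if)

lemma line_rank_chain:
  fixes A :: "real set"
  assumes "finite A" "is_line l"
  obtains \<sigma> :: int where "\<bar>\<sigma>\<bar> = 1"
    "\<And>p q. p \<in> l \<Longrightarrow> q \<in> l \<Longrightarrow> 0 \<le> \<sigma> * ((int (rank_in A (fst p)) - int (rank_in A (fst q)))
                                          * (int (rank_in A (snd p)) - int (rank_in A (snd q))))"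
proof -
  let ?r = "\<lambda>x. int (rank_in A x)"
  have mono_r: "mono ?r" using rank_in_mono[OF assms(1)] by (auto intro: monoI)
  obtain \<tau> :: real where \<tau>: "\<tau> = 1 \<or> \<tau> = -1"
    and sign: "\<And>p q. p \<in> l \<Longrightarrow> q \<in> l \<Longrightarrow> 0 \<le> \<tau> * ((fst p - fst q) * (snd p - snd q))"
    using assms(2) by (rule line_slope_sign) blast
  show thesis
  proof (cases "\<tau> = 1")
    case True
    show thesis
    proof (rule that[of 1])
      fix p q assume "p \<in> l" "q \<in> l"
      then show "0 \<le> 1 * ((?r (fst p) - ?r (fst q)) * (?r (snd p) - ?r (snd q)))"
        using mono_diff_mult_nonneg[OF mono_r mono_r] sign True by simp
    qed simp
  next
    case False
    show thesis
    proof (rule that[of "-1"])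
      fix p q assume "p \<in> l" "q \<in> l"
      then have "0 \<le> (fst p - fst q) * (snd q - snd p)"
        using sign[of p q] \<tau> False by (simp add: algebra_simps)
      then have "0 \<le> (?r (fst p) - ?r (fst q)) * (?r (snd q) - ?r (snd p))"
        by (rule mono_diff_mult_nonneg[OF mono_r mono_r])
      then show "0 \<le> -1 * ((?r (fst p) - ?r (fst q)) * (?r (snd p) - ?r (snd q)))"
        by (simp add: algebra_simps)
    qed simp
  qed
qed

lemma line_rank_embedding:
  fixes A :: "real set"
  assumes fin: "finite A" and line: "is_line l"
  obtains s :: "real \<times> real \<Rightarrow> int"
  where "inj_on s (l \<inter> A \<times> A)"
    and "s ` (l \<inter> A \<times> A) \<subseteq> {- int (card A)..<- int (card A) + 3 * int (card A)}"
    and "\<And>p q. p \<in> l \<Longrightarrow> q \<in> l \<Longrightarrow> real_of_int \<bar>s p - s q\<bar>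
           = \<bar>real (rank_in A (fst p)) - real (rank_in A (fst q))\<bar>
             + \<bar>real (rank_in A (snd p)) - real (rank_in A (snd q))\<bar>"
proof -
  define n where "n = card A"
  define rx ry where "rx p = int (rank_in A (fst p))" and "ry p = int (rank_in A (snd p))" for p
  obtain \<sigma> where \<sigma>: "\<bar>\<sigma>\<bar> = 1" and chain: "\<And>p q. p \<in> l \<Longrightarrow> q \<in> l \<Longrightarrow> 0 \<le> \<sigma> * ((rx p - rx q) * (ry p - ry q))"
    unfolding rx_def ry_def using line_rank_chain[OF fin line] by blast
  define s where "s p = rx p + \<sigma> * ry p" for p
  have gap: "\<bar>s p - s q\<bar> = \<bar>rx p - rx q\<bar> + \<bar>ry p - ry q\<bar>" if "p \<in> l" "q \<in> l" for p q
  proof -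
    have "0 \<le> (rx p - rx q) * (\<sigma> * (ry p - ry q))" using chain[OF that] by (simp add: ac_simps)
    then have "\<bar>(rx p - rx q) + \<sigma> * (ry p - ry q)\<bar> = \<bar>rx p - rx q\<bar> + \<bar>\<sigma> * (ry p - ry q)\<bar>"
      by (rule abs_add_eq_if_mult_nonneg)
    moreover have "s p - s q = (rx p - rx q) + \<sigma> * (ry p - ry q)" by (simp add: s_def algebra_simps)
    moreover have "\<bar>\<sigma> * (ry p - ry q)\<bar> = \<bar>ry p - ry q\<bar>" using \<sigma> by (simp add: abs_mult)
    ultimately show ?thesis by simp
  qed
  show thesis
  proof (rule that[of s])
    show "inj_on s (l \<inter> A \<times> A)"
    proof (rule inj_onI)
      fix p q assume pq: "p \<in> l \<inter> A \<times> A" "q \<in> l \<inter> A \<times> A" "s p = s q"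
      then have "\<bar>rx p - rx q\<bar> + \<bar>ry p - ry q\<bar> = 0" using gap[of p q] by simp
      then have "rank_in A (fst p) = rank_in A (fst q)" "rank_in A (snd p) = rank_in A (snd q)"
        unfolding rx_def ry_def by auto
      moreover have "fst p \<in> A" "fst q \<in> A" "snd p \<in> A" "snd q \<in> A" using pq by auto
      ultimately show "p = q" using inj_on_rank_in[OF fin] by (auto simp: inj_on_def prod_eq_iff)
    qed
    show "s ` (l \<inter> A \<times> A) \<subseteq> {- int (card A)..<- int (card A) + 3 * int (card A)}"
    proof (rule image_subsetI)
      fix p assume "p \<in> l \<inter> A \<times> A"
      then have "0 \<le> rx p" "rx p < int n" "0 \<le> ry p" "ry p < int n"
        using rank_in_less_card[OF fin] unfolding n_def rx_def ry_def by auto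
      moreover have "\<sigma> = 1 \<or> \<sigma> = -1" using \<sigma> by (auto simp: abs_if split: if_splits)
      ultimately show "s p \<in> {- int (card A)..<- int (card A) + 3 * int (card A)}"
        unfolding n_def by (auto simp: s_def)
    qed
    show "real_of_int \<bar>s p - s q\<bar> = \<bar>real (rank_in A (fst p)) - real (rank_in A (fst q))\<bar>
        + \<bar>real (rank_in A (snd p)) - real (rank_in A (snd q))\<bar>" if "p \<in> l" "q \<in> l" for p q
      using gap[OF that] unfolding rx_def ry_def by simp
  qed
qed

lemma inverse_square_add_le:
  fixes u v :: real
  assumes "0 \<le> u" "0 \<le> v"
  shows "1 / (u + v + 1) ^ 2 \<le> 1 / (u + 1) * (1 / (v + 1))"
proof -
  have "(u + 1) * (v + 1) \<le> (u + v + 1) ^ 2" using assms by (simp add: power2_eq_square algebra_simps)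
  then show ?thesis using assms by (simp add: frac_le)
qed

lemma cube_card_line_grid_le:
  fixes A :: "real set"
  assumes fin: "finite A" and line: "is_line l" and two: "2 \<le> card (l \<inter> A \<times> A)"
  shows "real (card (l \<inter> A \<times> A)) ^ 3 \<le> 324 * real (card A) ^ 2
    * (\<Sum>(p, q)\<in>{(p, q)\<in>(l \<inter> A \<times> A) \<times> (l \<inter> A \<times> A). p \<noteq> q}. grid_closeness A p q)"
proof -
  define S where "S = l \<inter> A \<times> A"
  obtain s where inj: "inj_on s S" and range: "s ` S \<subseteq> {- int (card A)..<- int (card A) + 3 * int (card A)}"
    and gap: "\<And>p q. p \<in> l \<Longrightarrow> q \<in> l \<Longrightarrow> real_of_int \<bar>s p - s q\<bar>
           = \<bar>real (rank_in A (fst p)) - real (rank_in A (fst q))\<bar>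
             + \<bar>real (rank_in A (snd p)) - real (rank_in A (snd q))\<bar>"
    unfolding S_def by (rule line_rank_embedding[OF fin line]) blast
  have "finite S" "2 \<le> card S" using fin two unfolding S_def by simp_all
  then have "real (card S) ^ 3 \<le> 36 * real_of_int (3 * int (card A)) ^ 2
      * (\<Sum>(p, q)\<in>{(p, q)\<in>S \<times> S. p \<noteq> q}. 1 / (real_of_int \<bar>s p - s q\<bar> + 1) ^ 2)"
    using cube_card_le_sum_inverse_square_gaps[OF _ inj range] by blast
  also have "\<dots> \<le> 324 * real (card A) ^ 2 * (\<Sum>(p, q)\<in>{(p, q)\<in>S \<times> S. p \<noteq> q}. grid_closeness A p q)"
  proof (rule mult_mono)
    show "(\<Sum>(p, q)\<in>{(p, q)\<in>S \<times> S. p \<noteq> q}. 1 / (real_of_int \<bar>s p - s q\<bar> + 1) ^ 2)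
        \<le> (\<Sum>(p, q)\<in>{(p, q)\<in>S \<times> S. p \<noteq> q}. grid_closeness A p q)"
    proof (rule sum_mono)
      fix z assume "z \<in> {(p, q)\<in>S \<times> S. p \<noteq> q}"
      then obtain p q where z: "z = (p, q)" and pq: "p \<in> l" "q \<in> l" unfolding S_def by auto
      have "1 / (real_of_int \<bar>s p - s q\<bar> + 1) ^ 2 \<le> grid_closeness A p q"
        unfolding gap[OF pq] grid_closeness_def rank_closeness_def by (rule inverse_square_add_le) simp_all
      then show "(\<lambda>(p, q). 1 / (real_of_int \<bar>s p - s q\<bar> + 1) ^ 2) z \<le> (\<lambda>(p, q). grid_closeness A p q) z"
        unfolding z by simp
    qed
  qed (auto simp: power2_eq_square intro!: sum_nonneg)
  finally show ?thesis unfolding S_def .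
qed

lemma sum_over_lines_sum_pairs_le:
  fixes f :: "(real \<times> real) \<times> (real \<times> real) \<Rightarrow> real"
  assumes lines: "\<And>l. l \<in> L \<Longrightarrow> is_line l" and X: "finite X" and Y: "finite Y"
    and nonneg: "\<And>z. z \<in> X \<times> Y \<Longrightarrow> 0 \<le> f z"
  shows "(\<Sum>l\<in>L. \<Sum>z\<in>{(p, q)\<in>(l \<inter> X) \<times> (l \<inter> Y). p \<noteq> q}. f z) \<le> (\<Sum>z\<in>X \<times> Y. f z)"
proof (cases "finite L")
  case False
  \<comment> \<open>the sum over an infinite family of lines is 0 by convention\<close>
  then show ?thesis using nonneg by (simp add: sum_nonneg)
next
  case True
  define G where "G l = {(p, q)\<in>(l \<inter> X) \<times> (l \<inter> Y). p \<noteq> q}" for l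
  have G_sub: "G l \<subseteq> X \<times> Y" for l unfolding G_def by auto
  have finite_G: "finite (G l)" for l using finite_subset[OF G_sub] X Y by blast
  have disjoint: "G l \<inter> G l' = {}" if "l \<in> L" "l' \<in> L" "l \<noteq> l'" for l l'
  proof (rule ccontr)
    assume "G l \<inter> G l' \<noteq> {}"
    then obtain p q where "p \<noteq> q" "p \<in> l" "q \<in> l" "p \<in> l'" "q \<in> l'" unfolding G_def by auto
    then have "l = l'" using line_eq_if_two_common_points lines that(1,2) by blast
    with that(3) show False ..
  qed
  have "(\<Sum>l\<in>L. \<Sum>z\<in>G l. f z) = (\<Sum>z\<in>(\<Union>l\<in>L. G l). f z)"
    using sum.UNION_disjoint[OF True, of G f] finite_G disjoint by simp
  also have "\<dots> \<le> (\<Sum>z\<in>X \<times> Y. f z)"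
    using G_sub X Y nonneg by (intro sum_mono2) auto
  finally show ?thesis unfolding G_def .
qed

lemma sum_cube_card_line_grid_le:
  fixes A :: "real set"
  assumes fin: "finite A" and lines: "\<And>l. l \<in> L \<Longrightarrow> is_line l"
    and rich: "\<And>l. l \<in> L \<Longrightarrow> 2 \<le> card (l \<inter> A \<times> A)"
  shows "(\<Sum>l\<in>L. real (card (l \<inter> A \<times> A)) ^ 3) \<le> 1296 * harm (card A) ^ 2 * real (card A) ^ 4"
proof -
  let ?n = "real (card A)"
  let ?g = "\<lambda>(p, q). grid_closeness A p q"
  have "(\<Sum>l\<in>L. real (card (l \<inter> A \<times> A)) ^ 3)
      \<le> (\<Sum>l\<in>L. 324 * ?n ^ 2 * (\<Sum>z\<in>{(p, q)\<in>(l \<inter> A \<times> A) \<times> (l \<inter> A \<times> A). p \<noteq> q}. ?g z))"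
    using cube_card_line_grid_le[OF fin lines rich] by (intro sum_mono) simp
  also have "\<dots> = 324 * ?n ^ 2 * (\<Sum>l\<in>L. \<Sum>z\<in>{(p, q)\<in>(l \<inter> A \<times> A) \<times> (l \<inter> A \<times> A). p \<noteq> q}. ?g z)"
    by (simp add: sum_distrib_left)
  also have "\<dots> \<le> 324 * ?n ^ 2 * (\<Sum>z\<in>(A \<times> A) \<times> (A \<times> A). ?g z)"
    using fin lines by (intro mult_left_mono sum_over_lines_sum_pairs_le) (auto simp: grid_closeness_nonneg)
  also have "(\<Sum>z\<in>(A \<times> A) \<times> (A \<times> A). ?g z) = (\<Sum>p\<in>A \<times> A. \<Sum>q\<in>A \<times> A. grid_closeness A p q)"
    by (simp add: sum.cartesian_product)
  also have "324 * ?n ^ 2 * \<dots> \<le> 324 * ?n ^ 2 * (4 * harm (card A) ^ 2 * ?n ^ 2)"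
    by (intro mult_left_mono sum_grid_closeness_le[OF fin]) simp
  also have "\<dots> = 1296 * harm (card A) ^ 2 * ?n ^ 4" by algebra
  finally show ?thesis .
qed

lemma sum_card_line_inter_le:
  fixes X Y :: "(real \<times> real) set"
  assumes X: "finite X" and Y: "finite Y" and lines: "\<And>l. l \<in> L \<Longrightarrow> is_line l"
    and meets: "\<And>l. l \<in> L \<Longrightarrow> l \<inter> X \<noteq> {}" and rich: "\<And>l. l \<in> L \<Longrightarrow> 2 \<le> card (l \<inter> Y)"
  shows "(\<Sum>l\<in>L. real (card (l \<inter> Y))) \<le> 2 * real (card X) * real (card Y)"
proof -
  let ?P = "\<lambda>l. {(p, q)\<in>(l \<inter> X) \<times> (l \<inter> Y). p \<noteq> q}"
  have per_line: "real (card (l \<inter> Y)) \<le> 2 * (\<Sum>z\<in>?P l. 1)" if l: "l \<in> L" for l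
  proof -
    obtain u where u: "u \<in> l \<inter> X" using meets[OF l] by blast
    have "Pair u ` (l \<inter> Y - {u}) \<subseteq> ?P l" using u by auto
    moreover have "finite (?P l)" using X Y by (auto intro: finite_subset[of _ "X \<times> Y"])
    ultimately have "card (Pair u ` (l \<inter> Y - {u})) \<le> card (?P l)"
      by (intro card_mono)
    moreover have "card (Pair u ` (l \<inter> Y - {u})) = card (l \<inter> Y - {u})"
      by (rule card_image) (simp add: inj_on_def)
    moreover have "card (l \<inter> Y) \<le> card (l \<inter> Y - {u}) + 1"
      using Y by (cases "u \<in> Y") (auto simp: card_Diff_singleton_if)
    ultimately show ?thesis using rich[OF l] by simp
  qed
  have "(\<Sum>l\<in>L. real (card (l \<inter> Y))) \<le> (\<Sum>l\<in>L. 2 * (\<Sum>z\<in>?P l. 1))"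
    by (rule sum_mono) (rule per_line)
  also have "\<dots> = 2 * (\<Sum>l\<in>L. \<Sum>z\<in>?P l. 1)" by (simp add: sum_distrib_left)
  also have "\<dots> \<le> 2 * (\<Sum>z\<in>X \<times> Y. 1)"
    using X Y lines by (intro mult_left_mono sum_over_lines_sum_pairs_le) auto
  finally show ?thesis by (simp add: card_cartesian_product)
qed

lemma powr_le_interpolation:
  fixes T p a :: real
  assumes T: "0 < T" and p: "1 \<le> p" "p \<le> 3" and a: "0 \<le> a"
  shows "a powr p \<le> T powr (p - 1) * a + T powr (p - 3) * a ^ 3"
proof (cases "a \<le> T")
  case True
  have "a powr p = a powr (p - 1) * a powr 1" by (subst powr_add[symmetric]) simp
  also have "\<dots> = a powr (p - 1) * a" using a by simp
  also have "\<dots> \<le> T powr (p - 1) * a" using True a p by (intro mult_right_mono powr_mono2) auto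
  finally show ?thesis by (rule add_increasing2[rotated]) (simp add: a)
next
  case False
  have "a powr p = a powr (p - 3) * a powr 3" by (simp add: powr_add[symmetric])
  also have "\<dots> = a powr (p - 3) * a ^ 3" using a by simp
  also have "\<dots> \<le> T powr (p - 3) * a ^ 3" using False T p a by (intro mult_right_mono powr_mono2') auto
  finally show ?thesis by (rule add_increasing[rotated]) (simp add: a)
qed

lemma sum_powr_le_by_moments:
  fixes w :: "'a \<Rightarrow> real" and N\<^sub>1 N K\<^sub>1 K\<^sub>3 p :: real
  assumes N: "0 < N\<^sub>1" "0 < N" and p: "1 \<le> p" "p \<le> 3" and w: "\<And>l. l \<in> L \<Longrightarrow> 0 \<le> w l"
    and first: "(\<Sum>l\<in>L. w l) \<le> K\<^sub>1 * N\<^sub>1 ^ 2 * N ^ 2"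
    and third: "(\<Sum>l\<in>L. w l ^ 3) \<le> K\<^sub>3 * N ^ 4"
  shows "(\<Sum>l\<in>L. w l powr p) \<le> (K\<^sub>1 + K\<^sub>3) * N\<^sub>1 powr (3 - p) * N powr (p + 1)"
proof -
  define T where "T = N / N\<^sub>1"
  have T: "0 < T" using N unfolding T_def by simp
  have first_scaled: "T powr (p - 1) * (N\<^sub>1 ^ 2 * N ^ 2) = N\<^sub>1 powr (3 - p) * N powr (p + 1)"
  proof -
    have "T powr (p - 1) * (N\<^sub>1 ^ 2 * N ^ 2) = (N powr (p - 1) * N powr 2) * (N\<^sub>1 powr 2 / N\<^sub>1 powr (p - 1))"
      using N unfolding T_def by (simp add: powr_divide powr_numeral)
    also have "\<dots> = N powr (p + 1) * N\<^sub>1 powr (3 - p)"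
      by (simp add: powr_add[symmetric] powr_diff[symmetric] add.commute)
    finally show ?thesis by simp
  qed
  have third_scaled: "T powr (p - 3) * N ^ 4 = N\<^sub>1 powr (3 - p) * N powr (p + 1)"
  proof -
    have "T powr (p - 3) * N ^ 4 = (N powr (p - 3) * N powr 4) * (1 / N\<^sub>1 powr (p - 3))"
      using N unfolding T_def by (simp add: powr_divide powr_numeral)
    also have "\<dots> = N powr (p + 1) * N\<^sub>1 powr (3 - p)"
      by (simp add: powr_add[symmetric] powr_minus_divide[symmetric] add.commute)
    finally show ?thesis by simp
  qed
  have "(\<Sum>l\<in>L. w l powr p) \<le> (\<Sum>l\<in>L. T powr (p - 1) * w l + T powr (p - 3) * w l ^ 3)"
    using powr_le_interpolation[OF T p] w by (intro sum_mono) auto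
  also have "\<dots> = T powr (p - 1) * (\<Sum>l\<in>L. w l) + T powr (p - 3) * (\<Sum>l\<in>L. w l ^ 3)"
    by (simp add: sum.distrib sum_distrib_left)
  also have "\<dots> \<le> T powr (p - 1) * (K\<^sub>1 * N\<^sub>1 ^ 2 * N ^ 2) + T powr (p - 3) * (K\<^sub>3 * N ^ 4)"
    using first third by (intro add_mono mult_left_mono) auto
  also have "\<dots> = (K\<^sub>1 + K\<^sub>3) * N\<^sub>1 powr (3 - p) * N powr (p + 1)"
    using first_scaled third_scaled by (simp add: algebra_simps)
  finally show ?thesis .
qed

lemma sum_alpha_powr_le:
  fixes A :: "nat \<Rightarrow> real set"
  assumes fin: "finite (A 1)" "finite (A i)" and p: "1 \<le> p" "p \<le> 3"
  shows "(\<Sum>l\<in>rich_lines2 A i. real (alpha A i l) powr p)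
    \<le> (2 + 1296 * harm (card (A i)) ^ 2) * real (card (A 1)) powr (3 - p) * real (card (A i)) powr (p + 1)"
proof (cases "rich_lines2 A i = {}")
  case True
  then show ?thesis by (simp add: harm_nonneg)
next
  case False
  let ?L = "rich_lines2 A i"
  have lines: "\<And>l. l \<in> ?L \<Longrightarrow> is_line l" and meets: "\<And>l. l \<in> ?L \<Longrightarrow> l \<inter> A 1 \<times> A 1 \<noteq> {}"
    and rich: "\<And>l. l \<in> ?L \<Longrightarrow> 2 \<le> card (l \<inter> A i \<times> A i)"
    unfolding rich_lines2_def rich_lines_def alpha_def by blast+
  from False obtain l where l: "l \<in> ?L" by blast
  have "A 1 \<noteq> {}" using meets[OF l] by blast
  moreover have "A i \<noteq> {}" using rich[OF l] by (cases "A i = {}") simp_all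
  ultimately have N: "0 < real (card (A 1))" "0 < real (card (A i))" using fin by auto
  show ?thesis unfolding alpha_def
  proof (rule sum_powr_le_by_moments[OF N p])
    show "(\<Sum>l\<in>?L. real (card (l \<inter> A i \<times> A i))) \<le> 2 * real (card (A 1)) ^ 2 * real (card (A i)) ^ 2"
      using sum_card_line_inter_le[of "A 1 \<times> A 1" "A i \<times> A i" ?L] fin lines meets rich
      by (simp add: card_cartesian_product power2_eq_square)
    show "(\<Sum>l\<in>?L. real (card (l \<inter> A i \<times> A i)) ^ 3) \<le> 1296 * harm (card (A i)) ^ 2 * real (card (A i)) ^ 4"
      using sum_cube_card_line_grid_le[OF fin(2) lines rich] .
  qed simp
qed

lemma two_plus_harm_sq_le_ln_sq:
  assumes "n \<le> m"
  shows "2 + 1296 * harm n ^ 2 \<le> 9000 * ln (2 + real m) powr 2"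
proof -
  define \<Lambda> where "\<Lambda> = ln (2 + real m)"
  have "ln 2 \<le> \<Lambda>" unfolding \<Lambda>_def by simp
  then have \<Lambda>: "2 / 3 \<le> \<Lambda>" using ln2_ge_two_thirds by linarith
  have "harm n \<le> 1 + \<Lambda>"
  proof (cases "n = 0")
    case True
    then show ?thesis using \<Lambda> by (simp add: harm_def)
  next
    case False
    have "ln (real n) \<le> \<Lambda>" using False assms unfolding \<Lambda>_def by simp
    then show ?thesis using harm_le_one_plus_ln[of n] False by simp
  qed
  then have "harm n ^ 2 \<le> (5 / 2 * \<Lambda>) ^ 2" using \<Lambda> by (intro power_mono) (auto simp: harm_nonneg)
  moreover have "(2 / 3) ^ 2 \<le> \<Lambda> ^ 2" using \<Lambda> by (intro power_mono) auto
  ultimately show ?thesis using \<Lambda> unfolding \<Lambda>_def by (simp add: power2_eq_square)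
qed

theorem mainTheorem3:
  shows "\<exists>C c::real. C > 0 \<and> c > 0 \<and>
    (\<forall>A :: nat \<Rightarrow> real set. \<forall>i p.
       finite (A 1) \<and> finite (A 2) \<and> finite (A 3) \<and>
       card (A 1) \<le> card (A 2) \<and> card (A 2) \<le> card (A 3) \<and>
       i \<in> {1, 2, 3} \<and> 1 \<le> p \<and> p \<le> 3 \<longrightarrow>
       (\<Sum>l\<in>rich_lines2 A i. real (alpha A i l) powr p)
         \<le> C * real (card (A 1)) powr (3 - p) * real (card (A i)) powr (p + 1)
             * ln (2 + real (card (A 3))) powr c)"
proof -
  have bound: "(\<Sum>l\<in>rich_lines2 A i. real (alpha A i l) powr p)
      \<le> 9000 * real (card (A 1)) powr (3 - p) * real (card (A i)) powr (p + 1) * ln (2 + real (card (A 3))) powr 2"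
    if H: "finite (A 1) \<and> finite (A 2) \<and> finite (A 3) \<and>
      card (A 1) \<le> card (A 2) \<and> card (A 2) \<le> card (A 3) \<and> i \<in> {1, 2, 3} \<and> 1 \<le> p \<and> p \<le> 3"
    for A :: "nat \<Rightarrow> real set" and i :: nat and p :: real
  proof -
    let ?size = "real (card (A 1)) powr (3 - p) * real (card (A i)) powr (p + 1)"
    have hyps: "finite (A 1)" "finite (A i)" "1 \<le> p" "p \<le> 3" and "card (A i) \<le> card (A 3)"
      using H by auto
    have "(\<Sum>l\<in>rich_lines2 A i. real (alpha A i l) powr p) \<le> (2 + 1296 * harm (card (A i)) ^ 2) * ?size"
      using sum_alpha_powr_le[OF hyps] by (simp only: mult.assoc)
    also have "\<dots> \<le> 9000 * ln (2 + real (card (A 3))) powr 2 * ?size"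
      using two_plus_harm_sq_le_ln_sq[OF \<open>card (A i) \<le> card (A 3)\<close>] by (rule mult_right_mono) simp
    finally show ?thesis by (simp only: ac_simps)
  qed
  show ?thesis
    by (rule exI[of _ 9000], rule exI[of _ 2]) (simp only: zero_less_numeral simp_thms, use bound in blast)
qed

end
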